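(* Let $k, r, a, b, m, n$ be integers satisfying $$k\geq 1,\quad 0\leq a\leq m,\quad \max\{0,\tfrac{a}{k}-r\}< b\leq n,\quad n> \tfrac{m}{k}-r.$$ Let $\mathcal{L}_{\frac1k,r}(a,b;m,n)$ be the set of lattice paths from $(a,b)$ to $(m,n)$ with unit steps $(1,0)$ and $(0,1)$ that stay strictly above the line $y=\frac{x}{k}-r$. Then $$|\mathcal{L}_{\frac1k,r}(a,b;m,n)|=\sum_{i=0}^{\lfloor\frac{k(n+r)-m-1}{k+1}\rfloor}(-1)^i\,\frac{k(b+r)-a}{(k+1)(n-i)-a-b+kr}\binom{(k+1)(n-i)-a-b+kr}{n-b-i}\binom{k(n+r-i)-m-1}{i}.$$
   Context: A path stays strictly above the line $y=\frac{x}{k}-r$ if every lattice point $(x,y)$ on it satisfies $y> \frac{x}{k}-r$. $\lfloor x\rfloor$ is the floor function. Binomial coefficients $\binom{N}{j}$ with $N\ge0$ equal $0$ when $j<0$ or $j>N$. *)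

theory Defs
  imports Complex_Main
begin

text \<open>A lattice path with unit steps is encoded by its list of steps:
  True = east step (1,0), False = north step (0,1).
  path_points p ss lists all lattice points visited, starting at p.\<close>

fun path_points :: "int \<times> int \<Rightarrow> bool list \<Rightarrow> (int \<times> int) list" where
  "path_points p [] = [p]"
| "path_points (x, y) (s # ss) =
     (x, y) # path_points (if s then (x + 1, y) else (x, y + 1)) ss"

definition above_paths :: "int \<Rightarrow> int \<Rightarrow> int \<Rightarrow> int \<Rightarrow> int \<Rightarrow> int \<Rightarrow> bool list set" where
  "above_paths k r a b m n =
     {ss. last (path_points (a, b) ss) = (m, n) \<and>
          (\<forall>(x, y) \<in> set (path_points (a, b) ss).
              real_of_int y > real_of_int x / real_of_int k - real_of_int r)}"

definition ibinom :: "int \<Rightarrow> int \<Rightarrow> int" where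
  "ibinom N j = (if N < 0 \<or> j < 0 then 0 else int (nat N choose nat j))"

end

theory Submission
  imports Defs
begin

text \<open>Write c = k(b + r) - a for the horizontal distance of (a, b) to the line, d = n - b and
  N = k(n + r) - m - 1. The i-th summand is then (-1)^i binom(N - k i, i) B(c, d - i), where the
  ballot numbers B(c, j) = c / (c + (k + 1) j) binom(c + (k + 1) j, j) satisfy
  B(c, j) = B(c - 1, j) + B(c + k, j - 1) except at (c, j) = (1, 0). Hence the sum obeys the path
  recurrence f(x, y) = f(x + 1, y) + f(x, y + 1) up to a correction at c = 1, which is
  binom(x - m, n - y) and so vanishes at every point (x, y) \<noteq> (m, n) with x \<le> m, y \<le> n.
  The sum vanishes on the line (c = 0) and on the row y = n + 1; by induction along the same
  recurrence it equals (-1)^d binom(x - m - 1, d) for x > m, so it also vanishes on the column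
  x = m + 1 below (m + 1, n). The number of paths satisfies the same recurrence with the same
  boundary values, so the two agree.\<close>

section \<open>Lattice paths through a region\<close>

lemma path_points_nonempty: "path_points p ss \<noteq> []"
  by (cases p; cases ss) auto

lemma start_in_path_points: "p \<in> set (path_points p ss)"
  by (cases p; cases ss) auto

lemma last_path_points:
  "last (path_points (x, y) ss) = (x + int (length (filter id ss)), y + int (length (filter Not ss)))"
proof (induction ss arbitrary: x y)
  case (Cons s ss)
  then show ?case
    by (cases s) (simp_all add: path_points_nonempty)
qed simp

definition good_paths ::
    "(int \<Rightarrow> int \<Rightarrow> bool) \<Rightarrow> int \<times> int \<Rightarrow> int \<times> int \<Rightarrow> bool list set" where
  "good_paths P p q = {ss. last (path_points p ss) = q \<and> (\<forall>(x, y) \<in> set (path_points p ss). P x y)}"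

lemma good_paths_displacement:
  assumes "ss \<in> good_paths P (a, b) (m, n)"
  shows "m = a + int (length (filter id ss))" "n = b + int (length (filter Not ss))"
    "int (length ss) = m - a + n - b"
proof -
  have "last (path_points (a, b) ss) = (m, n)"
    using assms by (simp add: good_paths_def)
  then show "m = a + int (length (filter id ss))" "n = b + int (length (filter Not ss))"
    by (simp_all add: last_path_points)
  moreover have "length (filter id ss) + length (filter Not ss) = length ss"
    using sum_length_filter_compl[of id ss] by (simp add: comp_def)
  ultimately show "int (length ss) = m - a + n - b"
    by linarith
qed

lemma good_paths_eq_empty:
  assumes "\<not> P a b \<or> m < a \<or> n < b"
  shows "good_paths P (a, b) (m, n) = {}"
  using assms good_paths_displacement start_in_path_points unfolding good_paths_def by fastforce

lemma finite_good_paths: "finite (good_paths P (a, b) (m, n))"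
proof (rule finite_subset)
  show "good_paths P (a, b) (m, n) \<subseteq> {ss. set ss \<subseteq> UNIV \<and> length ss = nat (m - a + n - b)}"
    using good_paths_displacement(3) by fastforce
qed (rule finite_lists_length_eq, simp)

lemma good_paths_target:
  assumes "P m n"
  shows "good_paths P (m, n) (m, n) = {[]}"
  using assms good_paths_displacement(3)[of _ P m n m n] by (auto simp: good_paths_def)

lemma good_paths_first_step:
  assumes "P a b" "(a, b) \<noteq> (m, n)"
  shows "good_paths P (a, b) (m, n) =
    Cons True ` good_paths P (a + 1, b) (m, n) \<union> Cons False ` good_paths P (a, b + 1) (m, n)"
proof (intro set_eqI iffI)
  fix ss assume "ss \<in> good_paths P (a, b) (m, n)"
  with assms show "ss \<in> Cons True ` good_paths P (a + 1, b) (m, n) \<union>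
      Cons False ` good_paths P (a, b + 1) (m, n)"
    by (cases ss) (auto simp: good_paths_def path_points_nonempty split: if_splits)
qed (use assms in \<open>auto simp: good_paths_def path_points_nonempty\<close>)

lemma card_good_paths_first_step:
  assumes "P a b" "(a, b) \<noteq> (m, n)"
  shows "card (good_paths P (a, b) (m, n)) =
    card (good_paths P (a + 1, b) (m, n)) + card (good_paths P (a, b + 1) (m, n))"
  unfolding good_paths_first_step[of P a b m n, OF assms]
  by (subst card_Un_disjoint) (auto simp: finite_good_paths card_image)

lemma card_good_paths_by_recurrence:
  fixes f :: "int \<Rightarrow> int \<Rightarrow> real"
  assumes step: "\<And>a b. P a b \<Longrightarrow> a \<le> m \<Longrightarrow> b \<le> n \<Longrightarrow> (a, b) \<noteq> (m, n) \<Longrightarrow>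
      f a b = f (a + 1) b + f a (b + 1)"
    and exit_east: "\<And>a b. P a b \<Longrightarrow> a \<le> m \<Longrightarrow> b \<le> n \<Longrightarrow> (a, b) \<noteq> (m, n) \<Longrightarrow>
      \<not> (P (a + 1) b \<and> a + 1 \<le> m) \<Longrightarrow> f (a + 1) b = 0"
    and exit_north: "\<And>a b. P a b \<Longrightarrow> a \<le> m \<Longrightarrow> b \<le> n \<Longrightarrow> (a, b) \<noteq> (m, n) \<Longrightarrow>
      \<not> (P a (b + 1) \<and> b + 1 \<le> n) \<Longrightarrow> f a (b + 1) = 0"
    and target: "P m n \<Longrightarrow> f m n = 1"
    and "P a b" "a \<le> m" "b \<le> n"
  shows "real (card (good_paths P (a, b) (m, n))) = f a b"
  using assms(5-)
proof (induction "nat (m - a + n - b)" arbitrary: a b rule: less_induct)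
  case less
  show ?case
  proof (cases "(a, b) = (m, n)")
    case True
    then show ?thesis
      using good_paths_target[of P m n] target less.prems by simp
  next
    case False
    have east: "real (card (good_paths P (a + 1, b) (m, n))) = f (a + 1) b"
    proof (cases "P (a + 1) b \<and> a + 1 \<le> m")
      case True
      then show ?thesis using less by simp
    next
      case False
      then show ?thesis
        using good_paths_eq_empty[of P "a + 1" b m n] exit_east less.prems \<open>(a, b) \<noteq> (m, n)\<close>
        by auto
    qed
    have north: "real (card (good_paths P (a, b + 1) (m, n))) = f a (b + 1)"
    proof (cases "P a (b + 1) \<and> b + 1 \<le> n")
      case True
      then show ?thesis using less by simp
    next
      case False
      then show ?thesis
        using good_paths_eq_empty[of P a "b + 1" m n] exit_north less.prems \<open>(a, b) \<noteq> (m, n)\<close>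
        by auto
    qed
    show ?thesis
      using card_good_paths_first_step[of P a b m n] step[of a b] east north less.prems False
      by simp
  qed
qed

section \<open>Binomial coefficients with integer arguments\<close>

lemma ibinom_eq_0: "N < j \<or> j < 0 \<Longrightarrow> ibinom N j = 0"
  by (auto simp: ibinom_def binomial_eq_0)

lemma ibinom_0_right: "0 \<le> N \<Longrightarrow> ibinom N 0 = 1"
  by (simp add: ibinom_def)

lemma ibinom_Suc:
  assumes "0 \<le> N"
  shows "ibinom (N + 1) j = ibinom N j + ibinom N (j - 1)"
proof (cases "j \<le> 0")
  case True
  then show ?thesis using assms by (auto simp: ibinom_def)
next
  case False
  then have "nat j = Suc (nat (j - 1))"
    by simp
  then show ?thesis
    using False assms by (simp add: ibinom_def nat_add_distrib)
qed

lemma ibinom_absorption: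
  assumes "1 \<le> L"
  shows "j * ibinom L j = L * ibinom (L - 1) (j - 1)"
proof (cases "j \<le> 0")
  case True
  then show ?thesis using assms by (auto simp: ibinom_def)
next
  case False
  define i where "i = nat j - 1"
  define l where "l = nat L - 1"
  have j: "j = int (Suc i)" "nat j = Suc i" "nat (j - 1) = i"
    and L: "L = int (Suc l)" "nat L = Suc l" "nat (L - 1) = l"
    using False assms by (simp_all add: i_def l_def)
  have "int (Suc i) * int (Suc l choose Suc i) = int (Suc l) * int (l choose i)"
    using binomial_absorption[of i "Suc l"] by (simp only: diff_Suc_1 flip: of_nat_mult)
  then show ?thesis
    using False assms unfolding ibinom_def j(2,3) L(2,3) by (simp only: j(1) L(1)) simp
qed

lemma ibinom_absorb_comp:
  assumes "1 \<le> L"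
  shows "(L - j) * ibinom L j = L * ibinom (L - 1) j"
proof (cases "j < 0 \<or> L < j")
  case True
  then show ?thesis using assms by (auto simp: ibinom_eq_0)
next
  case False
  define i where "i = nat j"
  define l where "l = nat L - 1"
  have j: "j = int i" "nat j = i" and L: "L = int (Suc l)" "nat L = Suc l" "nat (L - 1) = l"
    and "i \<le> Suc l"
    using False assms by (simp_all add: i_def l_def nat_le_eq_zle)
  have "(Suc l - i) * (Suc l choose i) = Suc l * (l choose i)"
    using binomial_absorb_comp[of "Suc l" i] by simp
  then have "int (Suc l - i) * int (Suc l choose i) = int (Suc l) * int (l choose i)"
    by (simp only: flip: of_nat_mult)
  then show ?thesis
    using \<open>i \<le> Suc l\<close> False assms unfolding ibinom_def j(2) L(2,3)
    by (simp only: j(1) L(1)) simp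
qed

section \<open>Ballot numbers and their weighted sums\<close>

text \<open>For c = 1 these are the Fuss-Catalan numbers.\<close>

definition ballot :: "int \<Rightarrow> int \<Rightarrow> int \<Rightarrow> real" where
  "ballot k c j = real_of_int c / real_of_int (c + (k + 1) * j) * real_of_int (ibinom (c + (k + 1) * j) j)"

lemma ballot_0_left [simp]: "ballot k 0 j = 0"
  by (simp add: ballot_def)

lemma ballot_neg_right: "j < 0 \<Longrightarrow> ballot k c j = 0"
  by (simp add: ballot_def ibinom_eq_0)

lemma ballot_0_right: "1 \<le> c \<Longrightarrow> ballot k c 0 = 1"
  by (simp add: ballot_def ibinom_0_right)

lemma ballot_recurrence_pos:
  assumes "0 \<le> k" "1 \<le> c" "1 \<le> j"
  shows "ballot k c j = ballot k (c - 1) j + ballot k (c + k) (j - 1)"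
proof -
  define L where "L = c + (k + 1) * j"
  have "j \<le> (k + 1) * j"
    using assms by (simp add: mult_le_cancel_right1)
  then have "2 \<le> L"
    using assms unfolding L_def by linarith
  define X Y Z where "X = real_of_int (ibinom L j)" and "Y = real_of_int (ibinom (L - 1) j)"
    and "Z = real_of_int (ibinom (L - 1) (j - 1))"
  have Y: "L * Y = (L - j) * X" and Z: "L * Z = j * X"
    using ibinom_absorb_comp[of L j] ibinom_absorption[of L j] \<open>2 \<le> L\<close>
    unfolding X_def Y_def Z_def by (simp_all flip: of_int_mult of_int_diff)
  have "real_of_int c * (L - 1) = (c - 1) * (L - j) + (c + k) * j"
    by (simp add: L_def algebra_simps)
  then have "real_of_int c * (L - 1) * X = ((c - 1) * (L - j) + (c + k) * j) * X"
    by simp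
  also have "\<dots> = (c - 1) * (L * Y) + (c + k) * (L * Z)"
    unfolding Y Z by (simp add: algebra_simps)
  finally have eq: "real_of_int c * (L - 1) * X = L * ((c - 1) * Y + (c + k) * Z)"
    by (simp add: algebra_simps)
  have nz: "real_of_int L \<noteq> 0" "real_of_int L - 1 \<noteq> 0"
    using \<open>2 \<le> L\<close> by simp_all
  have "real_of_int c / L * X = real_of_int c * (L - 1) * X / (L * (L - 1))"
    using nz by simp
  also have "\<dots> = ((c - 1) * Y + (c + k) * Z) / (L - 1)"
    unfolding eq using nz by simp
  also have "\<dots> = (c - 1) / (L - 1) * Y + (c + k) / (L - 1) * Z"
    by (simp only: add_divide_distrib times_divide_eq_left)
  finally show ?thesis
    using \<open>2 \<le> L\<close> unfolding ballot_def X_def Y_def Z_def L_def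
    by (simp add: algebra_simps)
qed

lemma ballot_recurrence:
  assumes "0 \<le> k" "1 \<le> c"
  shows "ballot k c j = ballot k (c - 1) j + ballot k (c + k) (j - 1) + (if c = 1 \<and> j = 0 then 1 else 0)"
proof -
  consider "j < 0" | "j = 0" | "1 \<le> j"
    by linarith
  then show ?thesis
  proof cases
    case 2
    then show ?thesis
      using assms by (cases "c = 1") (simp_all add: ballot_0_right ballot_neg_right)
  qed (use assms ballot_recurrence_pos in \<open>simp_all add: ballot_neg_right\<close>)
qed

definition ballot_sum :: "int \<Rightarrow> (int \<Rightarrow> real) \<Rightarrow> int \<Rightarrow> int \<Rightarrow> real" where
  "ballot_sum k w c d = (\<Sum>i\<in>{0..d}. w i * ballot k c (d - i))"

lemma ballot_sum_0_left: "ballot_sum k w 0 d = 0"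
  by (simp add: ballot_sum_def)

lemma ballot_sum_neg_right: "d < 0 \<Longrightarrow> ballot_sum k w c d = 0"
  by (simp add: ballot_sum_def)

lemma ballot_sum_recurrence:
  assumes "0 \<le> k" "1 \<le> c"
  shows "ballot_sum k w c d =
    ballot_sum k w (c - 1) d + ballot_sum k w (c + k) (d - 1) + (if c = 1 \<and> 0 \<le> d then w d else 0)"
proof -
  have "ballot_sum k w c d = (\<Sum>i\<in>{0..d}. w i * ballot k (c - 1) (d - i) +
      w i * ballot k (c + k) (d - 1 - i) + (if c = 1 \<and> i = d then w i else 0))"
    unfolding ballot_sum_def ballot_recurrence[OF assms]
    by (intro sum.cong) (auto simp: algebra_simps)
  also have "\<dots> = ballot_sum k w (c - 1) d + (\<Sum>i\<in>{0..d}. w i * ballot k (c + k) (d - 1 - i)) +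
      (\<Sum>i\<in>{0..d}. if c = 1 \<and> i = d then w i else 0)"
    by (simp add: ballot_sum_def sum.distrib)
  also have "(\<Sum>i\<in>{0..d}. w i * ballot k (c + k) (d - 1 - i)) = ballot_sum k w (c + k) (d - 1)"
    unfolding ballot_sum_def by (rule sum.mono_neutral_right) (auto simp: ballot_neg_right)
  also have "(\<Sum>i\<in>{0..d}. if c = 1 \<and> i = d then w i else 0) =
      (if c = 1 \<and> 0 \<le> d then w d else 0)"
    by (cases "c = 1") simp_all
  finally show ?thesis .
qed

definition alt_weight :: "int \<Rightarrow> int \<Rightarrow> int \<Rightarrow> real" where
  "alt_weight k N i = (-1) ^ nat i * real_of_int (ibinom (N - k * i) i)"

lemma alt_weight_eq_0: "N < (k + 1) * i \<Longrightarrow> alt_weight k N i = 0"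
  by (simp add: alt_weight_def ibinom_eq_0 algebra_simps)

lemma ballot_sum_alt_weight:
  assumes "0 \<le> k" "0 \<le> d" "1 \<le> c" "c + k * d \<le> N"
  shows "ballot_sum k (alt_weight k N) c d = (-1) ^ nat d * real_of_int (ibinom (N - k * d - c) d)"
  using assms(2-)
proof (induction d arbitrary: c rule: int_ge_induct)
  case base
  then show ?case
    by (simp add: ballot_sum_def alt_weight_def ibinom_0_right ballot_0_right)
next
  case (step d)
  have d_nonneg: "0 \<le> d"
    using step.hyps .
  define U where "U c' d' = (-1) ^ nat d' * real_of_int (ibinom (N - k * d' - c') d')" for c' d'
  have U: "U c' (d + 1) = U (c' - 1) (d + 1) + U (c' + k) d" if "c' + k * (d + 1) \<le> N" for c'
  proof -
    have "N - k * (d + 1) - (c' - 1) = (N - k * (d + 1) - c') + 1"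
      "N - k * d - (c' + k) = N - k * (d + 1) - c'" "nat (d + 1) = Suc (nat d)"
      using d_nonneg by (simp_all add: algebra_simps)
    then show ?thesis
      using ibinom_Suc[of "N - k * (d + 1) - c'" "d + 1"] that
      by (simp add: U_def algebra_simps)
  qed
  have IH: "ballot_sum k (alt_weight k N) (c' + k) d = U (c' + k) d"
    if "1 \<le> c'" "c' + k * (d + 1) \<le> N" for c'
    using step.IH[of "c' + k"] that assms(1) by (simp add: U_def algebra_simps)
  have "ballot_sum k (alt_weight k N) c (d + 1) = U c (d + 1)"
    using \<open>1 \<le> c\<close> \<open>c + k * (d + 1) \<le> N\<close>
  proof (induction c rule: int_ge_induct)
    case base
    have "alt_weight k N (d + 1) = U 0 (d + 1)"
      by (simp add: alt_weight_def U_def)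
    then show ?case
      using ballot_sum_recurrence[OF assms(1), of 1 "alt_weight k N" "d + 1"] U[OF base] IH[OF _ base]
        d_nonneg
      by (simp add: ballot_sum_0_left)
  next
    case (step c)
    have "ballot_sum k (alt_weight k N) (c + 1) (d + 1) =
        ballot_sum k (alt_weight k N) c (d + 1) + ballot_sum k (alt_weight k N) (c + 1 + k) d"
      using ballot_sum_recurrence[OF assms(1), of "c + 1" "alt_weight k N" "d + 1"] step.hyps by simp
    also have "\<dots> = U c (d + 1) + U (c + 1 + k) d"
      using step IH[of "c + 1"] by simp
    also have "\<dots> = U (c + 1) (d + 1)"
      using U[of "c + 1"] step.prems by simp
    finally show ?case .
  qed
  then show ?case
    by (simp add: U_def)
qed

lemma sum_atLeastAtMost_int_eq:
  fixes f :: "int \<Rightarrow> 'a::comm_monoid_add"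
  assumes "\<And>i. 0 \<le> i \<Longrightarrow> d < i \<Longrightarrow> f i = 0" "\<And>i. 0 \<le> i \<Longrightarrow> e < i \<Longrightarrow> f i = 0"
  shows "sum f {0..d} = sum f {0..e}"
proof -
  have "sum f {0..d} = sum f {0..max d e}"
    by (rule sum.mono_neutral_left) (auto intro: assms)
  also have "\<dots> = sum f {0..e}"
    by (rule sum.mono_neutral_right) (auto intro: assms)
  finally show ?thesis .
qed

lemma ballot_sum_alt_weight_truncated:
  assumes "0 \<le> k"
  shows "ballot_sum k (alt_weight k N) c d =
    (\<Sum>i\<in>{0..\<lfloor>real_of_int N / real_of_int (k + 1)\<rfloor>}. alt_weight k N i * ballot k c (d - i))"
  unfolding ballot_sum_def
proof (rule sum_atLeastAtMost_int_eq)
  fix i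
  show "alt_weight k N i * ballot k c (d - i) = 0" if "d < i"
    using that by (simp add: ballot_neg_right)
  assume "\<lfloor>real_of_int N / real_of_int (k + 1)\<rfloor> < i"
  then have "real_of_int N < real_of_int ((k + 1) * i)"
    using assms by (simp add: floor_less_iff pos_divide_less_eq algebra_simps)
  then show "alt_weight k N i * ballot k c (d - i) = 0"
    by (simp only: of_int_less_iff alt_weight_eq_0 mult_zero_left)
qed

section \<open>Paths strictly above a line\<close>

lemma above_line_iff:
  assumes "0 < k"
  shows "real_of_int x / real_of_int k - real_of_int r < real_of_int y \<longleftrightarrow> x < k * (y + r)"
proof -
  have "real_of_int x / real_of_int k - real_of_int r < real_of_int y \<longleftrightarrow>
      real_of_int x < real_of_int (k * (y + r))"
    using assms by (simp add: field_simps)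
  then show ?thesis
    by linarith
qed

lemma above_paths_eq_good_paths:
  assumes "0 < k"
  shows "above_paths k r a b m n = good_paths (\<lambda>x y. x < k * (y + r)) (a, b) (m, n)"
  using above_line_iff[OF assms] by (auto simp: above_paths_def good_paths_def)

lemma card_good_paths_above_line:
  fixes k r a b m n :: int
  defines "N \<equiv> k * (n + r) - m - 1"
  assumes "0 \<le> k" "a < k * (b + r)" "a \<le> m" "b \<le> n" "m < k * (n + r)"
  shows "real (card (good_paths (\<lambda>x y. x < k * (y + r)) (a, b) (m, n))) =
    ballot_sum k (alt_weight k N) (k * (b + r) - a) (n - b)"
proof (rule card_good_paths_by_recurrence
    [where f = "\<lambda>x y. ballot_sum k (alt_weight k N) (k * (y + r) - x) (n - y)"])
  fix x y
  assume xy: "x < k * (y + r)" "x \<le> m" "y \<le> n" "(x, y) \<noteq> (m, n)"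
  then have "alt_weight k N (n - y) = 0" if "k * (y + r) - x = 1"
    using that by (auto simp: alt_weight_def N_def ibinom_eq_0 algebra_simps)
  then show "ballot_sum k (alt_weight k N) (k * (y + r) - x) (n - y) =
      ballot_sum k (alt_weight k N) (k * (y + r) - (x + 1)) (n - y) +
      ballot_sum k (alt_weight k N) (k * (y + 1 + r) - x) (n - (y + 1))"
    using ballot_sum_recurrence[OF assms(2), of "k * (y + r) - x" "alt_weight k N" "n - y"] xy
    by (simp add: algebra_simps)
next
  fix x y
  assume xy: "x < k * (y + r)" "x \<le> m" "y \<le> n" "(x, y) \<noteq> (m, n)"
    and east_outside: "\<not> (x + 1 < k * (y + r) \<and> x + 1 \<le> m)"
  show "ballot_sum k (alt_weight k N) (k * (y + r) - (x + 1)) (n - y) = 0"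
  proof (cases "k * (y + r) - (x + 1) = 0")
    case False
    with xy east_outside have "x = m" "y < n"
      by auto
    then show ?thesis
      using ballot_sum_alt_weight[OF assms(2), of "n - y" "k * (y + r) - (m + 1)" N] xy False
      by (simp add: N_def algebra_simps ibinom_eq_0)
  qed (simp add: ballot_sum_0_left)
next
  fix x y
  assume xy: "x < k * (y + r)" "x \<le> m" "y \<le> n" "(x, y) \<noteq> (m, n)"
    and "\<not> (x < k * (y + 1 + r) \<and> y + 1 \<le> n)"
  moreover have "x < k * (y + 1 + r)"
    using xy assms(2) by (simp add: algebra_simps)
  ultimately show "ballot_sum k (alt_weight k N) (k * (y + 1 + r) - x) (n - (y + 1)) = 0"
    by (simp add: ballot_sum_neg_right)
next
  assume "m < k * (n + r)"
  then show "ballot_sum k (alt_weight k N) (k * (n + r) - m) (n - n) = 1"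
    by (simp add: ballot_sum_def alt_weight_def N_def ibinom_0_right ballot_0_right)
qed (use assms in auto)

theorem corollary2p3:
  fixes k r a b m n :: int
  assumes "k \<ge> 1" and "0 \<le> a" and "a \<le> m"
    and "max 0 (real_of_int a / real_of_int k - real_of_int r) < real_of_int b"
    and "b \<le> n"
    and "real_of_int n > real_of_int m / real_of_int k - real_of_int r"
  shows "real (card (above_paths k r a b m n)) =
    (\<Sum>i \<in> {0..\<lfloor>real_of_int (k * (n + r) - m - 1) / real_of_int (k + 1)\<rfloor>}.
       (-1) ^ nat i *
       (real_of_int (k * (b + r) - a) / real_of_int ((k + 1) * (n - i) - a - b + k * r)) *
       real_of_int (ibinom ((k + 1) * (n - i) - a - b + k * r) (n - b - i)) *
       real_of_int (ibinom (k * (n + r - i) - m - 1) i))"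
proof -
  define N where "N = k * (n + r) - m - 1"
  define c where "c = k * (b + r) - a"
  have "real (card (above_paths k r a b m n)) = ballot_sum k (alt_weight k N) c (n - b)"
    using assms above_line_iff[of k a r b] above_line_iff[of k m r n]
    by (simp add: above_paths_eq_good_paths card_good_paths_above_line N_def c_def)
  also have "\<dots> = (\<Sum>i\<in>{0..\<lfloor>real_of_int N / real_of_int (k + 1)\<rfloor>}.
      alt_weight k N i * ballot k c (n - b - i))"
    using assms(1) by (simp add: ballot_sum_alt_weight_truncated)
  finally show ?thesis
    unfolding N_def c_def
    by (rule trans) (rule sum.cong, simp_all add: alt_weight_def ballot_def algebra_simps)
qed

end
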